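(* (i) Let $\mathcal A=(D,A,B,C)\in\mathbb{R}^n\times\mathbb{R}\times\mathbb{R}\times\mathbb{R}$ with $C<0$ and $B-\frac{|D|^2}{4C}\in\mathcal S$, so that the associated $\rho=e^AZ(\beta,\Theta)$ and $\Theta=-\frac1{2C}$ are positive. Then $\nabla^2_{\mathcal A}\Sigma(\mathcal A)$ is a positive-definite symmetric $(n+3)\times(n+3)$ matrix. (ii) $\Sigma$ is a strictly convex function of $\mathcal A$ on the domain $\mathbb A=\{(D,A,B,C)\in\mathbb{R}^n\times\mathbb{R}\times\mathbb{R}\times\mathbb{R}:\ C<0,\ B-\frac{|D|^2}{4C}\in\mathcal S\}$.
   Context: Let $n\ge1$ and $(\gamma_m)_{m\ge1}$ in $[0,\infty)$ with $\mathcal S:=\{\beta\in\mathbb{R}:\sum_m\frac{me^{\beta m}}{\gamma_m}<\infty\}\neq\emptyset$. $Z(\beta,\Theta)=(2\pi\Theta)^{n/2}\sum_m\frac{me^{\beta m}}{\gamma_m}$. For $\mathcal A=(D,A,B,C)$ (entropic variables; $D\in\mathbb{R}^n$, $A,B,C\in\mathbb{R}$) and $m\ge1$, $v\in\mathbb{R}^n$, let $\boldsymbol\mu_m(v)\bullet\mathcal A:=m\,v\cdot D+A+mB+m|v|^2C$. The Massieu–Planck potential is $$\Sigma(\mathcal A)=\sum_{m\ge1}\int_{\mathbb{R}^n}\frac{m^{n/2}}{\gamma_m}e^{\boldsymbol\mu_m(v)\bullet\mathcal A}\,dv.$$ The associated macroscopic parameters are $\Theta=-\frac1{2C}$, $u=-\frac{D}{2C}$,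 $\beta=B-\frac{|D|^2}{4C}$, $\rho=e^AZ(\beta,\Theta)$. *)

theory Defs
  imports "HOL-Analysis.Analysis"
begin

text \<open>The index m ranges over m \<ge> 1; sums over m \<ge> 1 are written as sums over Suc m.\<close>

type_synonym 'n entropic = "(real^'n) \<times> real \<times> real \<times> real"

text \<open>The set S. The series is taken in the extended nonnegative reals, with the
  convention c / 0 = \<infinity> for c > 0 (so S \<noteq> {} forces all gamma_m > 0).\<close>
definition S_set :: "(nat \<Rightarrow> real) \<Rightarrow> real set" where
  "S_set \<gamma> = {\<beta>. (\<Sum>m. ennreal (real (Suc m) * exp (\<beta> * real (Suc m))) / ennreal (\<gamma> (Suc m))) < \<infinity>}"

definition mu_dot :: "nat \<Rightarrow> real^'n \<Rightarrow> ('n::finite) entropic \<Rightarrow> real" where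
  "mu_dot m v X = (let D = fst X; A = fst (snd X); B = fst (snd (snd X)); C = snd (snd (snd X)) in
      real m * (v \<bullet> D) + A + real m * B + real m * (norm v)\<^sup>2 * C)"

definition Sigma :: "(nat \<Rightarrow> real) \<Rightarrow> ('n::finite) entropic \<Rightarrow> real" where
  "Sigma \<gamma> X = (\<Sum>m. LINT v|lborel.
      (real (Suc m) powr (real CARD('n) / 2) / \<gamma> (Suc m)) * exp (mu_dot (Suc m) v X))"

definition entropic_domain :: "(nat \<Rightarrow> real) \<Rightarrow> ('n::finite) entropic set" where
  "entropic_domain \<gamma> = {X. snd (snd (snd X)) < 0 \<and>
     fst (snd (snd X)) - (norm (fst X))\<^sup>2 / (4 * snd (snd (snd X))) \<in> S_set \<gamma>}"

definition has_hessian :: "('a::euclidean_space \<Rightarrow> real) \<Rightarrow> ('a \<Rightarrow> 'a) \<Rightarrow> 'a \<Rightarrow> bool" where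
  "has_hessian f H x \<longleftrightarrow> (\<exists>G. (\<forall>\<^sub>F y in nhds x. (f has_derivative (\<lambda>h. G y \<bullet> h)) (at y))
      \<and> (G has_derivative H) (at x))"

definition symmetric_op :: "('a::real_inner \<Rightarrow> 'a) \<Rightarrow> bool" where
  "symmetric_op H \<longleftrightarrow> (\<forall>h k. H h \<bullet> k = h \<bullet> H k)"

definition pos_def_op :: "('a::real_inner \<Rightarrow> 'a) \<Rightarrow> bool" where
  "pos_def_op H \<longleftrightarrow> (\<forall>h. h \<noteq> 0 \<longrightarrow> h \<bullet> H h > 0)"

definition strict_convex_on :: "'a::real_vector set \<Rightarrow> ('a \<Rightarrow> real) \<Rightarrow> bool" where
  "strict_convex_on S f \<longleftrightarrow> convex S \<and>
    (\<forall>x\<in>S. \<forall>y\<in>S. \<forall>t. x \<noteq> y \<and> 0 < t \<and> t < 1 \<longrightarrow>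
       f ((1 - t) *\<^sub>R x + t *\<^sub>R y) < (1 - t) * f x + t * f y)"

end

theory Submission
  imports Defs "HOL-Probability.Distributions"
begin

(* Integrating out the velocity (a Gaussian integral) gives, on the half space C < 0,
     Sigma (D, A, B, C) = pi^(n/2) * sum_m exp (phi + m * beta) / gamma_m,
     phi = A - n/2 * ln (-C),   beta = B - |D|^2 / (4C).
   Both phi and beta are convex there (ln is concave, |D|^2 / (-C) is the perspective of the
   squared norm), so every summand is convex, and the summands with m = 1 and m = 2 already
   separate distinct points; hence Sigma is strictly convex.
   For the Hessian write Sigma = pi^(n/2) e^phi F_0 (beta) with F_k (b) = sum_m m^k e^(b m) / gamma_m,
   so that F_k' = F_(k+1) inside S.  Up to the factor pi^(n/2) e^phi, the quadratic form of the
   Hessian at h is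
     sum_m e^(m beta) / gamma_m * (Dphi h + m * Dbeta h)^2 + F_0 * D^2phi (h, h) + F_1 * D^2beta (h, h),
   a sum of nonnegative terms that vanish simultaneously only for h = 0. *)

section \<open>Gaussian integrals\<close>

lemma nn_integral_exp_linear_minus_quadratic:
  fixes c e :: real
  assumes c: "c > 0"
  shows "(\<integral>\<^sup>+x. ennreal (exp (e * x - c * x\<^sup>2)) \<partial>lborel) = ennreal (sqrt (pi / c) * exp (e\<^sup>2 / (4 * c)))"
proof -
  define \<sigma> where "\<sigma> = sqrt (1 / (2 * c))"
  define \<mu> where "\<mu> = e / (2 * c)"
  have \<sigma>2: "\<sigma>\<^sup>2 = 1 / (2 * c)" using c by (simp add: \<sigma>_def)
  have complete_square:
    "exp (e * x - c * x\<^sup>2) = sqrt (pi / c) * exp (e\<^sup>2 / (4 * c)) * normal_density \<mu> \<sigma> x" for x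
  proof -
    have "(x - \<mu>)\<^sup>2 / (2 * \<sigma>\<^sup>2) = c * (x - \<mu>)\<^sup>2" using c by (simp add: \<sigma>2)
    moreover have "e * x - c * x\<^sup>2 = e\<^sup>2 / (4 * c) - c * (x - \<mu>)\<^sup>2"
      using c by (simp add: \<mu>_def field_simps power2_eq_square)
    ultimately have "exp (e * x - c * x\<^sup>2) = exp (e\<^sup>2 / (4 * c)) * exp (- ((x - \<mu>)\<^sup>2 / (2 * \<sigma>\<^sup>2)))"
      by (simp add: exp_add[symmetric])
    moreover have "sqrt (2 * pi * \<sigma>\<^sup>2) = sqrt (pi / c)" using c by (simp add: \<sigma>2)
    ultimately show ?thesis using c by (simp add: normal_density_def)
  qed
  have "(\<integral>\<^sup>+x. ennreal (exp (e * x - c * x\<^sup>2)) \<partial>lborel)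
      = ennreal (sqrt (pi / c) * exp (e\<^sup>2 / (4 * c))) * (\<integral>\<^sup>+x. ennreal (normal_density \<mu> \<sigma> x) \<partial>lborel)"
    unfolding complete_square using c by (subst nn_integral_cmult[symmetric]) (auto simp: ennreal_mult)
  also have "(\<integral>\<^sup>+x. ennreal (normal_density \<mu> \<sigma> x) \<partial>lborel) = 1"
    using c by (subst nn_integral_eq_integral) (simp_all add: \<sigma>_def)
  finally show ?thesis by simp
qed

lemma nn_integral_exp_inner_minus_norm_sq:
  fixes D :: "'a::euclidean_space" and c :: real
  assumes c: "c > 0"
  shows "(\<integral>\<^sup>+v. ennreal (exp (v \<bullet> D - c * (norm v)\<^sup>2)) \<partial>lborel)
     = ennreal (sqrt (pi / c) ^ DIM('a) * exp ((norm D)\<^sup>2 / (4 * c)))"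
proof -
  have norm_sq: "(norm x)\<^sup>2 = (\<Sum>b\<in>Basis. (x \<bullet> b)\<^sup>2)" for x :: 'a
    unfolding power2_norm_eq_inner by (subst euclidean_inner) (simp add: power2_eq_square)
  have factor: "ennreal (exp (v \<bullet> D - c * (norm v)\<^sup>2))
      = (\<Prod>b\<in>Basis. ennreal (exp ((D \<bullet> b) * (v \<bullet> b) - c * (v \<bullet> b)\<^sup>2)))" for v
  proof -
    have "v \<bullet> D - c * (norm v)\<^sup>2 = (\<Sum>b\<in>Basis. (D \<bullet> b) * (v \<bullet> b) - c * (v \<bullet> b)\<^sup>2)"
      by (simp add: norm_sq euclidean_inner[of v D] sum_subtractf sum_distrib_left mult.commute)
    then show ?thesis by (simp add: exp_sum prod_ennreal)
  qed
  have "(\<integral>\<^sup>+v. ennreal (exp (v \<bullet> D - c * (norm v)\<^sup>2)) \<partial>lborel)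
      = (\<Prod>b\<in>Basis. \<integral>\<^sup>+x. ennreal (exp ((D \<bullet> b) * x - c * x\<^sup>2)) \<partial>lborel)"
    unfolding factor by (rule nn_integral_lborel_prod) auto
  also have "\<dots> = (\<Prod>b\<in>Basis. ennreal (sqrt (pi / c) * exp ((D \<bullet> b)\<^sup>2 / (4 * c))))"
    using nn_integral_exp_linear_minus_quadratic[OF c] by simp
  also have "\<dots> = ennreal (\<Prod>b\<in>Basis. sqrt (pi / c) * exp ((D \<bullet> b)\<^sup>2 / (4 * c)))"
    using c by (intro prod_ennreal) auto
  also have "(\<Prod>b\<in>Basis. sqrt (pi / c) * exp ((D \<bullet> b)\<^sup>2 / (4 * c)))
      = sqrt (pi / c) ^ DIM('a) * exp ((norm D)\<^sup>2 / (4 * c))"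
    by (simp add: prod.distrib exp_sum[symmetric] norm_sq sum_divide_distrib)
  finally show ?thesis .
qed

lemma integral_exp_inner_minus_norm_sq:
  fixes D :: "'a::euclidean_space" and c :: real
  assumes c: "c > 0"
  shows "(LINT v|lborel. exp (v \<bullet> D - c * (norm v)\<^sup>2))
    = sqrt (pi / c) ^ DIM('a) * exp ((norm D)\<^sup>2 / (4 * c))"
  by (subst integral_eq_nn_integral) (use c in \<open>auto simp: nn_integral_exp_inner_minus_norm_sq\<close>)

section \<open>Elementary convexity\<close>

lemma convex_comb_pos:
  fixes x y t :: real
  shows "0 < x \<Longrightarrow> 0 < y \<Longrightarrow> 0 \<le> t \<Longrightarrow> t \<le> 1 \<Longrightarrow> 0 < (1 - t) * x + t * y"
  by (smt (verit, best) mult_pos_pos split_mult_pos_le)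

lemma exp_gt_one_plus:
  fixes x :: real
  assumes "x \<noteq> 0"
  shows "1 + x < exp x"
proof (rule ccontr)
  assume "\<not> 1 + x < exp x"
  then have "ln (exp x) = exp x - 1" using exp_ge_add_one_self[of x] by simp
  then have "exp x = 1" by (rule ln_eq_minus_one[rotated]) simp
  with assms show False by simp
qed

lemma exp_convex_comb_less:
  fixes a b t :: real
  assumes t: "0 < t" "t < 1" and "a \<noteq> b"
  shows "exp ((1 - t) * a + t * b) < (1 - t) * exp a + t * exp b"
proof -
  define r where "r = (1 - t) * a + t * b"
  have "a - r = t * (a - b)" "b - r = (1 - t) * (b - a)" by (simp_all add: r_def algebra_simps)
  then have "1 + (a - r) < exp (a - r)" "1 + (b - r) < exp (b - r)"
    using t \<open>a \<noteq> b\<close> by (auto intro!: exp_gt_one_plus)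
  then have tangent: "exp r * (1 + (a - r)) < exp a" "exp r * (1 + (b - r)) < exp b"
    by (simp_all add: exp_diff field_simps)
  have "exp r = (1 - t) * (exp r * (1 + (a - r))) + t * (exp r * (1 + (b - r)))"
    by (simp add: r_def algebra_simps)
  also have "\<dots> < (1 - t) * exp a + t * exp b"
    using tangent t by (intro add_strict_mono mult_strict_left_mono) auto
  finally show ?thesis by (simp add: r_def)
qed

lemma exp_le_convex_comb_of_le:
  fixes a b c t :: real
  assumes "0 \<le> t" "t \<le> 1" "c \<le> (1 - t) * a + t * b"
  shows "exp c \<le> (1 - t) * exp a + t * exp b"
  using convex_onD[OF exp_convex, of t a b] assms by (simp add: order_trans[OF exp_mono])

lemma exp_less_convex_comb_of_le:
  fixes a b c t :: real
  assumes t: "0 < t" "t < 1" and le: "c \<le> (1 - t) * a + t * b"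
    and strict: "c < (1 - t) * a + t * b \<or> a \<noteq> b"
  shows "exp c < (1 - t) * exp a + t * exp b"
proof -
  have "exp ((1 - t) * a + t * b) \<le> (1 - t) * exp a + t * exp b"
    using convex_onD[OF exp_convex, of t a b] t by simp
  moreover have "exp ((1 - t) * a + t * b) < (1 - t) * exp a + t * exp b" if "a \<noteq> b"
    using exp_convex_comb_less[OF t that] .
  ultimately show ?thesis using le strict by (smt (verit) exp_less_cancel_iff exp_le_cancel_iff)
qed

lemma ln_convex_comb_less:
  fixes x y t :: real
  assumes t: "0 < t" "t < 1" and "x > 0" "y > 0" "x \<noteq> y"
  shows "(1 - t) * ln x + t * ln y < ln ((1 - t) * x + t * y)"
proof -
  have "exp ((1 - t) * ln x + t * ln y) < (1 - t) * x + t * y"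
    using exp_convex_comb_less[OF t, of "ln x" "ln y"] assms by simp
  moreover have "(1 - t) * x + t * y > 0" using assms by (intro add_pos_pos) auto
  ultimately show ?thesis by (metis exp_less_cancel_iff exp_ln)
qed

lemma norm_weighted_sum_sq_gap:
  fixes p q :: "'a::real_inner" and a b :: real
  shows "(a + b) * (a * (norm p)\<^sup>2 + b * (norm q)\<^sup>2) - (norm (a *\<^sub>R p + b *\<^sub>R q))\<^sup>2
    = a * b * (norm (p - q))\<^sup>2"
  unfolding power2_norm_eq_inner
  by (simp add: inner_add_left inner_add_right inner_diff_left inner_diff_right inner_commute[of q p]
      algebra_simps)

lemma perspective_norm_sq_convex:
  fixes D1 D2 :: "'a::real_inner" and c1 c2 t :: real
  assumes c: "c1 > 0" "c2 > 0" and t: "0 \<le> t" "t \<le> 1"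
  shows "(norm ((1 - t) *\<^sub>R D1 + t *\<^sub>R D2))\<^sup>2 / ((1 - t) * c1 + t * c2)
    \<le> (1 - t) * ((norm D1)\<^sup>2 / c1) + t * ((norm D2)\<^sup>2 / c2)"
proof -
  define a where "a = (1 - t) * c1"
  define b where "b = t * c2"
  have ab: "a \<ge> 0" "b \<ge> 0" "a + b > 0"
    using c t convex_comb_pos[of c1 c2 t] by (simp_all add: a_def b_def)
  have D: "(1 - t) *\<^sub>R D1 + t *\<^sub>R D2 = a *\<^sub>R ((1 / c1) *\<^sub>R D1) + b *\<^sub>R ((1 / c2) *\<^sub>R D2)"
    using c by (simp add: a_def b_def)
  have R: "(1 - t) * ((norm D1)\<^sup>2 / c1) + t * ((norm D2)\<^sup>2 / c2)
      = a * (norm ((1 / c1) *\<^sub>R D1))\<^sup>2 + b * (norm ((1 / c2) *\<^sub>R D2))\<^sup>2"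
    using c by (simp add: a_def b_def power2_eq_square field_simps)
  have "(norm (a *\<^sub>R ((1 / c1) *\<^sub>R D1) + b *\<^sub>R ((1 / c2) *\<^sub>R D2)))\<^sup>2
      \<le> (a + b) * (a * (norm ((1 / c1) *\<^sub>R D1))\<^sup>2 + b * (norm ((1 / c2) *\<^sub>R D2))\<^sup>2)"
    using norm_weighted_sum_sq_gap[of a b] ab by (smt (verit) mult_nonneg_nonneg zero_le_power2)
  then show ?thesis
    unfolding D R using ab by (simp add: divide_le_eq mult.commute a_def b_def)
qed

section \<open>The set S and the moment series\<close>

lemma S_set_nonempty_imp_weight_pos:
  assumes nonneg: "\<forall>m\<ge>1. \<gamma> m \<ge> 0" and "S_set \<gamma> \<noteq> {}"
  shows "0 < \<gamma> (Suc m)"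
proof (rule ccontr)
  assume "\<not> 0 < \<gamma> (Suc m)"
  then have zero: "\<gamma> (Suc m) = 0" using nonneg[rule_format, of "Suc m"] by simp
  obtain b where "b \<in> S_set \<gamma>" using \<open>S_set \<gamma> \<noteq> {}\<close> by blast
  then have "ennreal (real (Suc m) * exp (b * real (Suc m))) / ennreal (\<gamma> (Suc m)) < \<infinity>"
    unfolding S_set_def by (auto intro: ennreal_suminf_lessD)
  then show False using zero by simp
qed

lemma mem_interior_ex_greater:
  fixes b :: real
  assumes "b \<in> interior A"
  shows "\<exists>b'>b. b' \<in> A"
proof -
  obtain e where "e > 0" "ball b e \<subseteq> A" using assms by (meson mem_interior)
  then show ?thesis by (intro exI[of _ "b + e / 2"]) (auto simp: dist_real_def)
qed

definition moment_series :: "(nat \<Rightarrow> real) \<Rightarrow> nat \<Rightarrow> real \<Rightarrow> real" where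
  "moment_series \<gamma> k b = (\<Sum>m. real (Suc m) ^ k * exp (b * real (Suc m)) / \<gamma> (Suc m))"

locale pos_weights =
  fixes \<gamma> :: "nat \<Rightarrow> real"
  assumes weight_pos: "0 < \<gamma> (Suc m)"
begin

lemma mem_S_set_iff_summable:
  "b \<in> S_set \<gamma> \<longleftrightarrow> summable (\<lambda>m. real (Suc m) * exp (b * real (Suc m)) / \<gamma> (Suc m))"
proof -
  have nonneg: "0 \<le> real (Suc m) * exp (b * real (Suc m)) / \<gamma> (Suc m)" for m
    using weight_pos[of m] by simp
  have "(\<Sum>m. ennreal (real (Suc m) * exp (b * real (Suc m))) / ennreal (\<gamma> (Suc m)))
      = (\<Sum>m. ennreal (real (Suc m) * exp (b * real (Suc m)) / \<gamma> (Suc m)))"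
    using weight_pos by (intro suminf_cong divide_ennreal) auto
  then show ?thesis
    unfolding S_set_def mem_Collect_eq
    using summable_suminf_not_top[OF nonneg] suminf_ennreal2[OF nonneg] by (auto simp: top.not_eq_extremum)
qed

lemma summable_moment_le:
  assumes "b' \<in> S_set \<gamma>" "b \<le> b'" "k \<le> 1"
  shows "summable (\<lambda>m. real (Suc m) ^ k * exp (b * real (Suc m)) / \<gamma> (Suc m))"
proof (rule summable_comparison_test[OF _ iffD1[OF mem_S_set_iff_summable \<open>b' \<in> S_set \<gamma>\<close>]])
  have "real (Suc m) ^ k * exp (b * real (Suc m)) \<le> real (Suc m) * exp (b' * real (Suc m))" for m
    using assms by (intro mult_mono) (auto simp: le_Suc_eq power_increasing intro: mult_right_mono)
  then have "norm (real (Suc m) ^ k * exp (b * real (Suc m)) / \<gamma> (Suc m))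
      \<le> real (Suc m) * exp (b' * real (Suc m)) / \<gamma> (Suc m)" for m
    using weight_pos[of m] by (simp add: divide_right_mono abs_of_pos)
  then show "\<exists>N. \<forall>m\<ge>N. norm (real (Suc m) ^ k * exp (b * real (Suc m)) / \<gamma> (Suc m))
      \<le> real (Suc m) * exp (b' * real (Suc m)) / \<gamma> (Suc m)"
    by blast
qed

lemma S_set_downward_closed: "b' \<in> S_set \<gamma> \<Longrightarrow> b \<le> b' \<Longrightarrow> b \<in> S_set \<gamma>"
  using summable_moment_le[of b' b 1] by (simp add: mem_S_set_iff_summable)

lemma convex_S_set: "convex (S_set \<gamma>)"
  unfolding convex_def
proof (intro ballI allI impI)
  fix x y u v :: real
  assume "x \<in> S_set \<gamma>" "y \<in> S_set \<gamma>" "0 \<le> u" "0 \<le> v" "u + v = 1"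
  moreover have "u * x + v * y \<le> max x y"
    using \<open>0 \<le> u\<close> \<open>0 \<le> v\<close> \<open>u + v = 1\<close> by (intro convex_bound_le) auto
  moreover have "max x y \<in> S_set \<gamma>" using \<open>x \<in> S_set \<gamma>\<close> \<open>y \<in> S_set \<gamma>\<close> by (simp add: max_def)
  ultimately show "u *\<^sub>R x + v *\<^sub>R y \<in> S_set \<gamma>" using S_set_downward_closed by simp
qed

text \<open>Strictly inside S the factor \<open>exp ((b' - b) m) \<ge> (b' - b) m\<close> pays for one more power of m.\<close>
lemma summable_moment_less:
  assumes "b' \<in> S_set \<gamma>" "b < b'" "k \<le> 2"
  shows "summable (\<lambda>m. real (Suc m) ^ k * exp (b * real (Suc m)) / \<gamma> (Suc m))"
proof (rule summable_comparison_test[OF _ summable_mult[OF iffD1[OF mem_S_set_iff_summable \<open>b' \<in> S_set \<gamma>\<close>]]])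
  define d where "d = b' - b"
  have d: "d > 0" using assms by (simp add: d_def)
  have bound: "real (Suc m) ^ k * exp (b * real (Suc m)) \<le> 1 / d * (real (Suc m) * exp (b' * real (Suc m)))" for m
  proof -
    define x where "x = real (Suc m)"
    have x: "x \<ge> 1" by (simp add: x_def)
    have "x ^ k * exp (b * x) \<le> x\<^sup>2 * exp (b * x)"
      using assms x by (intro mult_right_mono power_increasing) auto
    also have "\<dots> = x * (d * x) * exp (b * x) / d" using d by (simp add: power2_eq_square)
    also have "\<dots> \<le> x * exp (d * x) * exp (b * x) / d"
    proof -
      have "d * x \<le> exp (d * x)" using exp_ge_add_one_self[of "d * x"] by linarith
      then show ?thesis using x d by (intro divide_right_mono mult_right_mono mult_left_mono) simp_all
    qed
    also have "\<dots> = 1 / d * (x * exp (b' * x))" by (simp add: d_def exp_add[symmetric] algebra_simps)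
    finally show ?thesis by (simp add: x_def)
  qed
  show "\<exists>N. \<forall>m\<ge>N. norm (real (Suc m) ^ k * exp (b * real (Suc m)) / \<gamma> (Suc m))
      \<le> 1 / d * (real (Suc m) * exp (b' * real (Suc m)) / \<gamma> (Suc m))"
  proof (intro exI allI impI)
    fix m :: nat
    show "norm (real (Suc m) ^ k * exp (b * real (Suc m)) / \<gamma> (Suc m))
      \<le> 1 / d * (real (Suc m) * exp (b' * real (Suc m)) / \<gamma> (Suc m))"
      using divide_right_mono[OF bound[of m] less_imp_le[OF weight_pos[of m]]] weight_pos[of m]
      by (simp add: abs_of_pos)
  qed
qed

lemma summable_moment_series:
  assumes "b \<in> interior (S_set \<gamma>)" "k \<le> 2"
  shows "summable (\<lambda>m. real (Suc m) ^ k * exp (b * real (Suc m)) / \<gamma> (Suc m))"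
  using mem_interior_ex_greater[OF assms(1)] summable_moment_less assms(2) by blast

lemma moment_series_pos:
  assumes "b \<in> interior (S_set \<gamma>)" "k \<le> 2"
  shows "0 < moment_series \<gamma> k b"
  unfolding moment_series_def using weight_pos by (intro suminf_pos summable_moment_series assms) auto

lemma moment_series_has_derivative:
  assumes "b \<in> interior (S_set \<gamma>)" "k \<le> 1"
  shows "(moment_series \<gamma> k has_real_derivative moment_series \<gamma> (Suc k) b) (at b)"
proof -
  obtain b' where b': "b < b'" "b' \<in> S_set \<gamma>" using mem_interior_ex_greater[OF assms(1)] by blast
  define d where "d = (b' - b) / 2"
  have d: "d > 0" "b + d < b'" using b' by (auto simp: d_def field_simps)
  define f where "f k m x = real (Suc m) ^ k * exp (x * real (Suc m)) / \<gamma> (Suc m)" for k m x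
  have "((\<lambda>x. \<Sum>m. f k m x) has_field_derivative (\<Sum>m. f (Suc k) m b)) (at b)"
  proof (rule has_field_derivative_series'(2)[of "{b - d..b + d}"])
    show "(f k m has_field_derivative f (Suc k) m x) (at x within {b - d..b + d})" for m x
      unfolding f_def using weight_pos[of m] by (auto intro!: derivative_eq_intros)
    have "uniform_limit {b - d..b + d} (\<lambda>n x. \<Sum>m<n. f (Suc k) m x) (\<lambda>x. \<Sum>m. f (Suc k) m x) sequentially"
    proof (rule Weierstrass_m_test)
      show "summable (\<lambda>m. f (Suc k) m (b + d))"
        unfolding f_def using summable_moment_less[OF b'(2) d(2), of "Suc k"] assms(2) by simp
      show "norm (f (Suc k) m x) \<le> f (Suc k) m (b + d)" if "x \<in> {b - d..b + d}" for m x
        unfolding f_def using that weight_pos[of m]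
        by (auto simp: abs_mult intro!: divide_right_mono mult_left_mono mult_right_mono)
    qed
    then show "uniformly_convergent_on {b - d..b + d} (\<lambda>n x. \<Sum>m<n. f (Suc k) m x)"
      unfolding uniformly_convergent_on_def by blast
    show "summable (\<lambda>m. f k m b)"
      unfolding f_def using summable_moment_series[OF assms(1)] assms(2) by simp
  qed (use d in auto)
  moreover have "moment_series \<gamma> k = (\<lambda>x. \<Sum>m. f k m x)" "moment_series \<gamma> (Suc k) b = (\<Sum>m. f (Suc k) m b)"
    by (auto simp: moment_series_def f_def fun_eq_iff)
  ultimately show ?thesis by simp
qed

text \<open>The form is the series of the squares \<open>(u + m w)^2\<close> with positive weights.\<close>
lemma moment_series_quadratic_pos:
  assumes "b \<in> interior (S_set \<gamma>)" "u \<noteq> 0 \<or> w \<noteq> 0"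
  shows "0 < moment_series \<gamma> 0 b * u\<^sup>2 + 2 * moment_series \<gamma> 1 b * u * w + moment_series \<gamma> 2 b * w\<^sup>2"
proof -
  define e where "e m = exp (b * real (Suc m)) / \<gamma> (Suc m)" for m
  have e: "e m > 0" for m using weight_pos[of m] by (simp add: e_def)
  have summable: "summable (\<lambda>m. real (Suc m) ^ k * e m)" if "k \<le> 2" for k
    using summable_moment_series[OF assms(1) that] by (simp add: e_def)
  have series: "moment_series \<gamma> k b = (\<Sum>m. real (Suc m) ^ k * e m)" for k
    by (simp add: moment_series_def e_def)
  have "(\<lambda>m. (real (Suc m) ^ 0 * e m) * u\<^sup>2 + (real (Suc m) ^ 1 * e m) * (2 * u * w)
      + (real (Suc m) ^ 2 * e m) * w\<^sup>2)
    sums (moment_series \<gamma> 0 b * u\<^sup>2 + moment_series \<gamma> 1 b * (2 * u * w) + moment_series \<gamma> 2 b * w\<^sup>2)"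
    unfolding series by (intro sums_add sums_mult2 summable_sums summable) auto
  then have sums: "(\<lambda>m. e m * (u + real (Suc m) * w)\<^sup>2) sums
      (moment_series \<gamma> 0 b * u\<^sup>2 + 2 * moment_series \<gamma> 1 b * u * w + moment_series \<gamma> 2 b * w\<^sup>2)"
    by (simp add: power2_eq_square algebra_simps)
  have "u + real (Suc 0) * w \<noteq> 0 \<or> u + real (Suc 1) * w \<noteq> 0" using assms(2) by auto
  then obtain i where "u + real (Suc i) * w \<noteq> 0" by blast
  then have "0 < e i * (u + real (Suc i) * w)\<^sup>2" using e[of i] by simp
  moreover have "0 \<le> e m * (u + real (Suc m) * w)\<^sup>2" for m
    using e[of m] by (intro mult_nonneg_nonneg) auto
  ultimately have "0 < (\<Sum>m. e m * (u + real (Suc m) * w)\<^sup>2)"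
    using sums_summable[OF sums] by (intro suminf_pos2[of _ i])
  then show ?thesis using sums by (simp add: sums_iff)
qed

end

section \<open>Closed form of the Massieu--Planck potential\<close>

text \<open>With \<open>\<Theta> = -1/(2C)\<close> one has \<open>entropic_phi (D, A, B, C) = A + n/2 ln (2\<Theta>)\<close>, and
  \<open>entropic_beta\<close> is the paper's \<open>\<beta>\<close>.\<close>

definition entropic_phi :: "('n::finite) entropic \<Rightarrow> real" where
  "entropic_phi X = fst (snd X) - real CARD('n) / 2 * ln (- snd (snd (snd X)))"

definition entropic_beta :: "('n::finite) entropic \<Rightarrow> real" where
  "entropic_beta X = fst (snd (snd X)) - (norm (fst X))\<^sup>2 / (4 * snd (snd (snd X)))"

definition entropic_exponent :: "nat \<Rightarrow> ('n::finite) entropic \<Rightarrow> real" where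
  "entropic_exponent m X = entropic_phi X + real m * entropic_beta X"

definition Sigma_summand :: "(nat \<Rightarrow> real) \<Rightarrow> nat \<Rightarrow> ('n::finite) entropic \<Rightarrow> real" where
  "Sigma_summand \<gamma> m X = pi powr (real CARD('n) / 2) / \<gamma> m * exp (entropic_exponent m X)"

lemma sqrt_power_eq_powr: "x > 0 \<Longrightarrow> sqrt x ^ n = x powr (real n / 2)"
  by (simp add: powr_half_sqrt[symmetric] powr_realpow[symmetric] powr_powr)

lemma integral_Sigma_summand:
  fixes D :: "real^'n::finite"
  assumes C: "C < 0" and "m > 0"
  shows "(LINT v|lborel. (real m powr (real CARD('n) / 2) / \<gamma> m) * exp (mu_dot m v (D, A, B, C)))
    = Sigma_summand \<gamma> m (D, A, B, C)"
proof -
  define M where "M = real m"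
  define c where "c = M * (- C)"
  define n where "n = real CARD('n)"
  have M: "M > 0" using \<open>m > 0\<close> by (simp add: M_def)
  have c: "c > 0" using C M by (simp add: c_def mult_pos_neg)
  have mu: "mu_dot m v (D, A, B, C) = (A + M * B) + (v \<bullet> (M *\<^sub>R D) - c * (norm v)\<^sup>2)" for v
    by (simp add: mu_dot_def M_def c_def algebra_simps)
  have "(LINT v|lborel. (M powr (n / 2) / \<gamma> m) * exp (mu_dot m v (D, A, B, C)))
      = (M powr (n / 2) / \<gamma> m * exp (A + M * B)) * (LINT v|lborel. exp (v \<bullet> (M *\<^sub>R D) - c * (norm v)\<^sup>2))"
    unfolding mu exp_add by (simp add: mult.assoc)
  also have "\<dots> = (M powr (n / 2) / \<gamma> m * exp (A + M * B))
      * ((pi / c) powr (n / 2) * exp (M\<^sup>2 * (norm D)\<^sup>2 / (4 * c)))"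
    using integral_exp_inner_minus_norm_sq[OF c, of "M *\<^sub>R D"] sqrt_power_eq_powr[of "pi / c" "CARD('n)"]
      c M
    by (simp add: n_def power_mult_distrib)
  also have "\<dots> = pi powr (n / 2)
      * (exp (A + M * B) * exp (- M * (norm D)\<^sup>2 / (4 * C)) / exp (n / 2 * ln (- C))) / \<gamma> m"
  proof -
    have "(pi / c) powr (n / 2) = pi powr (n / 2) / c powr (n / 2)" using c by (simp add: powr_divide)
    also have "c powr (n / 2) = M powr (n / 2) * (- C) powr (n / 2)"
      unfolding c_def by (rule powr_mult)
    also have "(- C) powr (n / 2) = exp (n / 2 * ln (- C))" using C by (simp add: powr_def)
    finally have pc: "(pi / c) powr (n / 2) = pi powr (n / 2) / (M powr (n / 2) * exp (n / 2 * ln (- C)))" .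
    have e: "M\<^sup>2 * (norm D)\<^sup>2 / (4 * c) = - M * (norm D)\<^sup>2 / (4 * C)"
      using M C by (simp add: c_def power2_eq_square field_simps)
    show ?thesis unfolding pc e using M by (simp add: field_simps)
  qed
  also have "\<dots> = pi powr (n / 2) * exp (A - n / 2 * ln (- C) + M * (B - (norm D)\<^sup>2 / (4 * C))) / \<gamma> m"
    by (simp add: exp_add[symmetric] exp_diff[symmetric] algebra_simps)
  finally show ?thesis
    by (simp add: Sigma_summand_def entropic_exponent_def entropic_phi_def entropic_beta_def M_def n_def)
qed

lemma Sigma_eq_suminf:
  fixes X :: "('n::finite) entropic"
  assumes "snd (snd (snd X)) < 0"
  shows "Sigma \<gamma> X = (\<Sum>m. Sigma_summand \<gamma> (Suc m) X)"
proof -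
  obtain D A B C where X: "X = (D, A, B, C)" by (cases X) auto
  show ?thesis
    unfolding Sigma_def X using assms X by (intro suminf_cong integral_Sigma_summand) simp_all
qed

lemma exp_entropic_exponent_eq:
  "exp (entropic_exponent m X) = exp (entropic_phi X) * exp (entropic_beta X * real m)"
  by (simp add: entropic_exponent_def exp_add mult.commute)

context pos_weights
begin

lemma summable_Sigma_summands:
  fixes X :: "('n::finite) entropic"
  assumes "entropic_beta X \<in> S_set \<gamma>"
  shows "summable (\<lambda>m. Sigma_summand \<gamma> (Suc m) X)"
  using summable_mult[OF summable_moment_le[OF assms order_refl, of 0],
      of "pi powr (real CARD('n) / 2) * exp (entropic_phi X)"]
  by (simp add: Sigma_summand_def exp_entropic_exponent_eq mult.assoc)

lemma Sigma_eq_moment_series: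
  fixes X :: "('n::finite) entropic"
  assumes "snd (snd (snd X)) < 0" "entropic_beta X \<in> S_set \<gamma>"
  shows "Sigma \<gamma> X
    = pi powr (real CARD('n) / 2) * exp (entropic_phi X) * moment_series \<gamma> 0 (entropic_beta X)"
  unfolding Sigma_eq_suminf[OF assms(1)] moment_series_def
  using suminf_mult[OF summable_moment_le[OF assms(2) order_refl, of 0],
      of "pi powr (real CARD('n) / 2) * exp (entropic_phi X)"]
  by (simp add: Sigma_summand_def exp_entropic_exponent_eq mult.assoc)

end

section \<open>Strict convexity\<close>

lemma entropic_phi_convex_comb:
  "entropic_phi ((1 - t) *\<^sub>R (D1, A1, B1, C1) + t *\<^sub>R (D2, A2, B2, C2) :: ('n::finite) entropic)
    = (1 - t) * A1 + t * A2 - real CARD('n) / 2 * ln ((1 - t) * (- C1) + t * (- C2))"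
  by (simp add: entropic_phi_def)

lemma entropic_beta_eq: "entropic_beta (D, A, B, C) = B + (norm D)\<^sup>2 / (- C) / 4"
  by (simp add: entropic_beta_def)

lemma entropic_beta_convex_comb:
  "entropic_beta ((1 - t) *\<^sub>R (D1, A1, B1, C1) + t *\<^sub>R (D2, A2, B2, C2) :: ('n::finite) entropic)
    = (1 - t) * B1 + t * B2 + (norm ((1 - t) *\<^sub>R D1 + t *\<^sub>R D2))\<^sup>2 / ((1 - t) * (- C1) + t * (- C2)) / 4"
  by (simp add: entropic_beta_eq)

lemma entropic_phi_convex:
  fixes X Y :: "('n::finite) entropic"
  assumes "snd (snd (snd X)) < 0" "snd (snd (snd Y)) < 0" "0 \<le> t" "t \<le> 1"
  shows "entropic_phi ((1 - t) *\<^sub>R X + t *\<^sub>R Y) \<le> (1 - t) * entropic_phi X + t * entropic_phi Y"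
proof -
  obtain D1 A1 B1 C1 D2 A2 B2 C2 where X: "X = (D1, A1, B1, C1)" and Y: "Y = (D2, A2, B2, C2)"
    by (cases X, cases Y) auto
  have "(1 - t) * ln (- C1) + t * ln (- C2) \<le> ln ((1 - t) * (- C1) + t * (- C2))"
    using concave_onD[OF ln_concave, of t "- C1" "- C2"] assms by (simp add: X Y)
  then have "real CARD('n) / 2 * ((1 - t) * ln (- C1) + t * ln (- C2))
      \<le> real CARD('n) / 2 * ln ((1 - t) * (- C1) + t * (- C2))"
    by (rule mult_left_mono) simp
  moreover have "(1 - t) * entropic_phi X + t * entropic_phi Y
      = (1 - t) * A1 + t * A2 - real CARD('n) / 2 * ((1 - t) * ln (- C1) + t * ln (- C2))"
    by (simp add: X Y entropic_phi_def field_simps)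
  ultimately show ?thesis unfolding X Y entropic_phi_convex_comb by linarith
qed

lemma entropic_phi_convex_strict:
  fixes X Y :: "('n::finite) entropic"
  assumes "snd (snd (snd X)) < 0" "snd (snd (snd Y)) < 0" "snd (snd (snd X)) \<noteq> snd (snd (snd Y))"
    and "0 < t" "t < 1"
  shows "entropic_phi ((1 - t) *\<^sub>R X + t *\<^sub>R Y) < (1 - t) * entropic_phi X + t * entropic_phi Y"
proof -
  obtain D1 A1 B1 C1 D2 A2 B2 C2 where X: "X = (D1, A1, B1, C1)" and Y: "Y = (D2, A2, B2, C2)"
    by (cases X, cases Y) auto
  have "(1 - t) * ln (- C1) + t * ln (- C2) < ln ((1 - t) * (- C1) + t * (- C2))"
    using ln_convex_comb_less[of t "- C1" "- C2"] assms by (simp add: X Y)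
  then have "real CARD('n) / 2 * ((1 - t) * ln (- C1) + t * ln (- C2))
      < real CARD('n) / 2 * ln ((1 - t) * (- C1) + t * (- C2))"
    by (rule mult_strict_left_mono) simp
  moreover have "(1 - t) * entropic_phi X + t * entropic_phi Y
      = (1 - t) * A1 + t * A2 - real CARD('n) / 2 * ((1 - t) * ln (- C1) + t * ln (- C2))"
    by (simp add: X Y entropic_phi_def field_simps)
  ultimately show ?thesis unfolding X Y entropic_phi_convex_comb by linarith
qed

lemma entropic_beta_convex:
  fixes X Y :: "('n::finite) entropic"
  assumes "snd (snd (snd X)) < 0" "snd (snd (snd Y)) < 0" "0 \<le> t" "t \<le> 1"
  shows "entropic_beta ((1 - t) *\<^sub>R X + t *\<^sub>R Y) \<le> (1 - t) * entropic_beta X + t * entropic_beta Y"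
proof -
  obtain D1 A1 B1 C1 D2 A2 B2 C2 where X: "X = (D1, A1, B1, C1)" and Y: "Y = (D2, A2, B2, C2)"
    by (cases X, cases Y) auto
  have "(norm ((1 - t) *\<^sub>R D1 + t *\<^sub>R D2))\<^sup>2 / ((1 - t) * (- C1) + t * (- C2))
      \<le> (1 - t) * ((norm D1)\<^sup>2 / (- C1)) + t * ((norm D2)\<^sup>2 / (- C2))"
    using perspective_norm_sq_convex[of "- C1" "- C2" t D1 D2] assms by (simp add: X Y)
  note perspective = divide_right_mono[OF this zero_le_numeral]
  have rhs: "(1 - t) * entropic_beta X + t * entropic_beta Y
      = (1 - t) * B1 + t * B2 + ((1 - t) * ((norm D1)\<^sup>2 / (- C1)) + t * ((norm D2)\<^sup>2 / (- C2))) / 4"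
    unfolding X Y entropic_beta_eq
    by (simp only: distrib_left add_divide_distrib times_divide_eq_right ac_simps)
  show ?thesis unfolding rhs unfolding X Y entropic_beta_convex_comb
    using perspective by (rule add_left_mono)
qed

lemma entropic_beta_convex_strict:
  fixes X Y :: "('n::finite) entropic"
  assumes "snd (snd (snd X)) < 0" "snd (snd (snd X)) = snd (snd (snd Y))" "fst X \<noteq> fst Y"
    and "0 < t" "t < 1"
  shows "entropic_beta ((1 - t) *\<^sub>R X + t *\<^sub>R Y) < (1 - t) * entropic_beta X + t * entropic_beta Y"
proof -
  obtain D1 A1 B1 C D2 A2 B2 where X: "X = (D1, A1, B1, C)" and Y: "Y = (D2, A2, B2, C)"
    using assms(2) by (cases X, cases Y) auto
  have "(1 - t) * t * (norm (D1 - D2))\<^sup>2 > 0" using assms by (simp add: X Y)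
  then have "(norm ((1 - t) *\<^sub>R D1 + t *\<^sub>R D2))\<^sup>2 < (1 - t) * (norm D1)\<^sup>2 + t * (norm D2)\<^sup>2"
    using norm_weighted_sum_sq_gap[of "1 - t" t D1 D2] by simp
  then have "(norm ((1 - t) *\<^sub>R D1 + t *\<^sub>R D2))\<^sup>2 / (- C)
      < ((1 - t) * (norm D1)\<^sup>2 + t * (norm D2)\<^sup>2) / (- C)"
    by (rule divide_strict_right_mono) (use assms(1) X in simp)
  also have "\<dots> = (1 - t) * ((norm D1)\<^sup>2 / (- C)) + t * ((norm D2)\<^sup>2 / (- C))"
    by (simp only: add_divide_distrib times_divide_eq_right)
  finally have "(norm ((1 - t) *\<^sub>R D1 + t *\<^sub>R D2))\<^sup>2 / ((1 - t) * (- C) + t * (- C))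
      < (1 - t) * ((norm D1)\<^sup>2 / (- C)) + t * ((norm D2)\<^sup>2 / (- C))"
    by (simp add: algebra_simps)
  note strict = divide_strict_right_mono[OF this zero_less_numeral]
  have rhs: "(1 - t) * entropic_beta X + t * entropic_beta Y
      = (1 - t) * B1 + t * B2 + ((1 - t) * ((norm D1)\<^sup>2 / (- C)) + t * ((norm D2)\<^sup>2 / (- C))) / 4"
    unfolding X Y entropic_beta_eq
    by (simp only: distrib_left add_divide_distrib times_divide_eq_right ac_simps)
  show ?thesis unfolding rhs unfolding X Y entropic_beta_convex_comb
    using strict by (rule add_strict_left_mono)
qed

lemma entropic_exponent_convex:
  fixes X Y :: "('n::finite) entropic"
  assumes "snd (snd (snd X)) < 0" "snd (snd (snd Y)) < 0" "0 \<le> t" "t \<le> 1"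
  shows "entropic_exponent m ((1 - t) *\<^sub>R X + t *\<^sub>R Y)
    \<le> (1 - t) * entropic_exponent m X + t * entropic_exponent m Y"
  using entropic_phi_convex[OF assms] mult_left_mono[OF entropic_beta_convex[OF assms], of "real m"]
  by (simp add: entropic_exponent_def algebra_simps)

text \<open>Strictness comes from \<open>ln\<close> when the C-coordinates differ, from the squared norm when the
  D-coordinates differ, and otherwise from the affine dependence on A and B, where the exponents
  with m = 1 and m = 2 are independent combinations.\<close>
lemma entropic_exponent_separates:
  fixes X Y :: "('n::finite) entropic"
  assumes C: "snd (snd (snd X)) < 0" "snd (snd (snd Y)) < 0" and "X \<noteq> Y" and t: "0 < t" "t < 1"
  shows "\<exists>m\<in>{1, 2}.
    entropic_exponent m ((1 - t) *\<^sub>R X + t *\<^sub>R Y)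
      < (1 - t) * entropic_exponent m X + t * entropic_exponent m Y
    \<or> entropic_exponent m X \<noteq> entropic_exponent m Y"
proof -
  let ?Z = "(1 - t) *\<^sub>R X + t *\<^sub>R Y"
  have phi: "entropic_phi ?Z \<le> (1 - t) * entropic_phi X + t * entropic_phi Y"
    using entropic_phi_convex[OF C] t by simp
  have beta: "entropic_beta ?Z \<le> (1 - t) * entropic_beta X + t * entropic_beta Y"
    using entropic_beta_convex[OF C] t by simp
  consider "snd (snd (snd X)) \<noteq> snd (snd (snd Y))"
    | "snd (snd (snd X)) = snd (snd (snd Y))" "fst X \<noteq> fst Y"
    | "snd (snd (snd X)) = snd (snd (snd Y))" "fst X = fst Y"
    by blast
  then show ?thesis
  proof cases
    case 1
    then have "entropic_exponent 1 ?Z < (1 - t) * entropic_exponent 1 X + t * entropic_exponent 1 Y"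
      using entropic_phi_convex_strict[OF C 1 t] beta by (simp add: entropic_exponent_def algebra_simps)
    then show ?thesis by blast
  next
    case 2
    then have "entropic_exponent 1 ?Z < (1 - t) * entropic_exponent 1 X + t * entropic_exponent 1 Y"
      using entropic_beta_convex_strict[OF C(1) 2 t] phi by (simp add: entropic_exponent_def algebra_simps)
    then show ?thesis by blast
  next
    case 3
    obtain D C A1 B1 A2 B2 where X: "X = (D, A1, B1, C)" and Y: "Y = (D, A2, B2, C)"
      using 3 by (cases X, cases Y) auto
    have "A1 \<noteq> A2 \<or> B1 \<noteq> B2" using \<open>X \<noteq> Y\<close> by (simp add: X Y)
    then have "A1 + B1 \<noteq> A2 + B2 \<or> A1 + 2 * B1 \<noteq> A2 + 2 * B2" by linarith
    then have "entropic_exponent 1 X \<noteq> entropic_exponent 1 Y \<or> entropic_exponent 2 X \<noteq> entropic_exponent 2 Y"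
      by (simp add: X Y entropic_exponent_def entropic_phi_def entropic_beta_def)
    then show ?thesis by blast
  qed
qed

lemma suminf_convex_comb_less:
  fixes f g h :: "nat \<Rightarrow> real"
  assumes "summable f" "summable g" "summable h"
    and "\<And>m. f m \<le> (1 - t) * g m + t * h m" "f i < (1 - t) * g i + t * h i"
  shows "suminf f < (1 - t) * suminf g + t * suminf h"
proof -
  have "0 < (\<Sum>m. (1 - t) * g m + t * h m - f m)"
    using assms by (intro suminf_pos2[of _ i] summable_diff summable_add summable_mult) auto
  also have "\<dots> = (1 - t) * suminf g + t * suminf h - suminf f"
    using assms by (intro sums_unique[symmetric] sums_diff sums_add sums_mult summable_sums)
  finally show ?thesis by simp
qed

context pos_weights
begin

lemma entropic_domain_eq: "entropic_domain \<gamma> = {X. snd (snd (snd X)) < 0 \<and> entropic_beta X \<in> S_set \<gamma>}"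
  by (simp add: entropic_domain_def entropic_beta_def)

lemma convex_entropic_domain: "convex (entropic_domain \<gamma> :: ('n::finite) entropic set)"
  unfolding convex_alt entropic_domain_eq
proof (intro ballI allI impI CollectI conjI)
  fix X Y :: "'n entropic" and t :: real
  assume X: "X \<in> {X. snd (snd (snd X)) < 0 \<and> entropic_beta X \<in> S_set \<gamma>}"
    and Y: "Y \<in> {X. snd (snd (snd X)) < 0 \<and> entropic_beta X \<in> S_set \<gamma>}" and t: "0 \<le> t \<and> t \<le> 1"
  show "snd (snd (snd ((1 - t) *\<^sub>R X + t *\<^sub>R Y))) < 0"
    using convex_comb_pos[of "- snd (snd (snd X))" "- snd (snd (snd Y))" t] X Y t by simp
  have "(1 - t) * entropic_beta X + t * entropic_beta Y \<in> S_set \<gamma>"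
    using convex_S_set X Y t unfolding convex_alt by simp
  then show "entropic_beta ((1 - t) *\<^sub>R X + t *\<^sub>R Y) \<in> S_set \<gamma>"
    using S_set_downward_closed entropic_beta_convex X Y t by blast
qed

lemma Sigma_summand_convex:
  fixes X Y :: "('n::finite) entropic"
  assumes "snd (snd (snd X)) < 0" "snd (snd (snd Y)) < 0" "0 \<le> t" "t \<le> 1"
  shows "Sigma_summand \<gamma> (Suc m) ((1 - t) *\<^sub>R X + t *\<^sub>R Y)
    \<le> (1 - t) * Sigma_summand \<gamma> (Suc m) X + t * Sigma_summand \<gamma> (Suc m) Y"
proof -
  have "exp (entropic_exponent (Suc m) ((1 - t) *\<^sub>R X + t *\<^sub>R Y))
      \<le> (1 - t) * exp (entropic_exponent (Suc m) X) + t * exp (entropic_exponent (Suc m) Y)"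
    using assms by (intro exp_le_convex_comb_of_le entropic_exponent_convex)
  note exp_comb = this
  define c where "c = pi powr (real CARD('n) / 2) / \<gamma> (Suc m)"
  have c: "c > 0" using weight_pos[of m] by (simp add: c_def)
  from mult_left_mono[OF exp_comb less_imp_le[OF c]] show ?thesis
    unfolding Sigma_summand_def c_def[symmetric] by (simp add: algebra_simps)
qed

lemma Sigma_summand_convex_strict:
  fixes X Y :: "('n::finite) entropic"
  assumes "snd (snd (snd X)) < 0" "snd (snd (snd Y)) < 0" "0 < t" "t < 1"
    and "entropic_exponent (Suc m) ((1 - t) *\<^sub>R X + t *\<^sub>R Y)
        < (1 - t) * entropic_exponent (Suc m) X + t * entropic_exponent (Suc m) Y
      \<or> entropic_exponent (Suc m) X \<noteq> entropic_exponent (Suc m) Y"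
  shows "Sigma_summand \<gamma> (Suc m) ((1 - t) *\<^sub>R X + t *\<^sub>R Y)
    < (1 - t) * Sigma_summand \<gamma> (Suc m) X + t * Sigma_summand \<gamma> (Suc m) Y"
proof -
  have "exp (entropic_exponent (Suc m) ((1 - t) *\<^sub>R X + t *\<^sub>R Y))
      < (1 - t) * exp (entropic_exponent (Suc m) X) + t * exp (entropic_exponent (Suc m) Y)"
    using assms by (intro exp_less_convex_comb_of_le entropic_exponent_convex) auto
  note exp_comb = this
  define c where "c = pi powr (real CARD('n) / 2) / \<gamma> (Suc m)"
  have c: "c > 0" using weight_pos[of m] by (simp add: c_def)
  from mult_strict_left_mono[OF exp_comb c] show ?thesis
    unfolding Sigma_summand_def c_def[symmetric] by (simp add: algebra_simps)
qed

lemma strict_convex_on_Sigma: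
  "strict_convex_on (entropic_domain \<gamma> :: ('n::finite) entropic set) (Sigma \<gamma>)"
  unfolding strict_convex_on_def
proof (intro conjI convex_entropic_domain ballI allI impI)
  fix X Y :: "'n entropic" and t :: real
  assume X: "X \<in> entropic_domain \<gamma>" and Y: "Y \<in> entropic_domain \<gamma>" and "X \<noteq> Y \<and> 0 < t \<and> t < 1"
  then have "X \<noteq> Y" and t: "0 < t" "t < 1" by auto
  define Z where "Z = (1 - t) *\<^sub>R X + t *\<^sub>R Y"
  have "Z \<in> entropic_domain \<gamma>"
    using convex_entropic_domain X Y t unfolding convex_alt Z_def by auto
  then have C: "snd (snd (snd X)) < 0" "snd (snd (snd Y)) < 0" "snd (snd (snd Z)) < 0"
    and S: "entropic_beta X \<in> S_set \<gamma>" "entropic_beta Y \<in> S_set \<gamma>" "entropic_beta Z \<in> S_set \<gamma>"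
    using X Y by (auto simp: entropic_domain_eq)
  obtain m :: nat where "m \<in> {1, 2}" and separates:
    "entropic_exponent m Z < (1 - t) * entropic_exponent m X + t * entropic_exponent m Y
      \<or> entropic_exponent m X \<noteq> entropic_exponent m Y"
    using entropic_exponent_separates[OF C(1,2) \<open>X \<noteq> Y\<close> t] unfolding Z_def by blast
  then obtain i where "m = Suc i" by auto
  with separates have "(\<Sum>m. Sigma_summand \<gamma> (Suc m) Z)
      < (1 - t) * (\<Sum>m. Sigma_summand \<gamma> (Suc m) X) + t * (\<Sum>m. Sigma_summand \<gamma> (Suc m) Y)"
    unfolding Z_def using C(1,2) t S[THEN summable_Sigma_summands]
    by (intro suminf_convex_comb_less[of _ _ _ _ i] Sigma_summand_convex Sigma_summand_convex_strict)
      (simp_all add: Z_def)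
  then show "Sigma \<gamma> ((1 - t) *\<^sub>R X + t *\<^sub>R Y) < (1 - t) * Sigma \<gamma> X + t * Sigma \<gamma> Y"
    using C by (simp add: Sigma_eq_suminf Z_def)
qed

end

section \<open>The Hessian\<close>

definition grad_phi :: "('n::finite) entropic \<Rightarrow> 'n entropic" where
  "grad_phi X = (0, 1, 0, - real CARD('n) / (2 * snd (snd (snd X))))"

definition grad_beta :: "('n::finite) entropic \<Rightarrow> 'n entropic" where
  "grad_beta X =
    (- (1 / (2 * snd (snd (snd X)))) *\<^sub>R fst X, 0, 1, (fst X \<bullet> fst X) / (4 * (snd (snd (snd X)))\<^sup>2))"

definition hess_phi :: "('n::finite) entropic \<Rightarrow> 'n entropic \<Rightarrow> 'n entropic" where
  "hess_phi X h = (0, 0, 0, real CARD('n) * snd (snd (snd h)) / (2 * (snd (snd (snd X)))\<^sup>2))"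

definition hess_beta :: "('n::finite) entropic \<Rightarrow> 'n entropic \<Rightarrow> 'n entropic" where
  "hess_beta X h =
    (- (1 / (2 * snd (snd (snd X)))) *\<^sub>R fst h + (snd (snd (snd h)) / (2 * (snd (snd (snd X)))\<^sup>2)) *\<^sub>R fst X,
     0, 0,
     (fst X \<bullet> fst h) / (2 * (snd (snd (snd X)))\<^sup>2)
       - (fst X \<bullet> fst X) * snd (snd (snd h)) / (2 * (snd (snd (snd X)))^3))"

lemma inner_grad_phi:
  "grad_phi X \<bullet> h = fst (snd h) - real CARD('n) / (2 * snd (snd (snd X))) * snd (snd (snd h))"
  for X h :: "('n::finite) entropic"
  by (simp add: grad_phi_def inner_prod_def)

lemma inner_grad_beta:
  "grad_beta X \<bullet> h = - (fst X \<bullet> fst h) / (2 * snd (snd (snd X))) + fst (snd (snd h))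
    + (fst X \<bullet> fst X) / (4 * (snd (snd (snd X)))\<^sup>2) * snd (snd (snd h))"
  for X h :: "('n::finite) entropic"
  by (simp add: grad_beta_def inner_prod_def)

lemma inner_hess_phi:
  "hess_phi X h \<bullet> k = real CARD('n) * snd (snd (snd h)) * snd (snd (snd k)) / (2 * (snd (snd (snd X)))\<^sup>2)"
  for X h k :: "('n::finite) entropic"
  by (simp add: hess_phi_def inner_prod_def)

lemma inner_hess_beta:
  "hess_beta X h \<bullet> k = - (fst h \<bullet> fst k) / (2 * snd (snd (snd X)))
    + snd (snd (snd h)) * (fst X \<bullet> fst k) / (2 * (snd (snd (snd X)))\<^sup>2)
    + snd (snd (snd k)) * (fst X \<bullet> fst h) / (2 * (snd (snd (snd X)))\<^sup>2)
    - (fst X \<bullet> fst X) * snd (snd (snd h)) * snd (snd (snd k)) / (2 * (snd (snd (snd X)))^3)"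
  for X h k :: "('n::finite) entropic"
  by (simp add: hess_beta_def inner_prod_def inner_add_left algebra_simps
      add_divide_distrib diff_divide_distrib)

lemma inner_hess_phi_self:
  "hess_phi X h \<bullet> h = real CARD('n) * (snd (snd (snd h)))\<^sup>2 / (2 * (snd (snd (snd X)))\<^sup>2)"
  for X h :: "('n::finite) entropic"
  by (simp add: inner_hess_phi power2_eq_square)

lemma hess_phi_symmetric: "hess_phi X h \<bullet> k = hess_phi X k \<bullet> h" for X h k :: "('n::finite) entropic"
  by (simp add: inner_hess_phi algebra_simps)

lemma hess_beta_symmetric: "hess_beta X h \<bullet> k = hess_beta X k \<bullet> h" for X h k :: "('n::finite) entropic"
  unfolding inner_hess_beta by (simp add: algebra_simps inner_commute)

lemma inner_hess_beta_self:
  fixes X h :: "('n::finite) entropic"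
  assumes "snd (snd (snd X)) \<noteq> 0"
  shows "hess_beta X h \<bullet> h
    = (norm (fst h - (snd (snd (snd h)) / snd (snd (snd X))) *\<^sub>R fst X))\<^sup>2 / (- 2 * snd (snd (snd X)))"
  unfolding inner_hess_beta power2_norm_eq_inner using assms
  by (simp add: inner_diff_left inner_diff_right inner_commute field_simps power2_eq_square power3_eq_cube)

lemma inner_hess_phi_self_nonneg: "0 \<le> hess_phi X h \<bullet> h" for X h :: "('n::finite) entropic"
  by (simp add: inner_hess_phi_self)

lemma inner_hess_beta_self_nonneg:
  fixes X h :: "('n::finite) entropic"
  assumes "snd (snd (snd X)) < 0"
  shows "0 \<le> hess_beta X h \<bullet> h"
  using assms by (simp add: inner_hess_beta_self divide_nonneg_neg)

lemma hess_phi_or_hess_beta_pos: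
  fixes X h :: "('n::finite) entropic"
  assumes C: "snd (snd (snd X)) < 0" and "h \<noteq> 0" "grad_phi X \<bullet> h = 0" "grad_beta X \<bullet> h = 0"
  shows "0 < hess_phi X h \<bullet> h \<or> 0 < hess_beta X h \<bullet> h"
proof -
  obtain hD hA hB hC where h: "h = (hD, hA, hB, hC)" by (cases h) auto
  have "hC \<noteq> 0 \<or> hD \<noteq> 0"
    using assms(2-4) by (auto simp: h inner_grad_phi inner_grad_beta zero_prod_def)
  then show ?thesis
  proof
    assume "hC \<noteq> 0"
    then show ?thesis using C by (simp add: h inner_hess_phi_self)
  next
    assume "hD \<noteq> 0"
    then show ?thesis
      using C by (cases "hC = 0") (simp_all add: h inner_hess_phi_self inner_hess_beta_self divide_pos_neg)
  qed
qed

lemma entropic_phi_has_derivative: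
  fixes X :: "('n::finite) entropic"
  assumes "snd (snd (snd X)) < 0"
  shows "(entropic_phi has_derivative (\<lambda>h. grad_phi X \<bullet> h)) (at X)"
  unfolding entropic_phi_def[abs_def] inner_grad_phi using assms
  by (auto intro!: derivative_eq_intros simp: field_simps)

lemma entropic_beta_has_derivative:
  fixes X :: "('n::finite) entropic"
  assumes "snd (snd (snd X)) < 0"
  shows "(entropic_beta has_derivative (\<lambda>h. grad_beta X \<bullet> h)) (at X)"
proof -
  have eq: "entropic_beta = (\<lambda>X. fst (snd (snd X)) - (fst X \<bullet> fst X) / (4 * snd (snd (snd X))))"
    by (auto simp: entropic_beta_def power2_norm_eq_inner fun_eq_iff)
  show ?thesis
    unfolding eq inner_grad_beta using assms
    by (auto intro!: derivative_eq_intros simp: field_simps power2_eq_square inner_commute)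
qed

lemma grad_phi_has_derivative:
  fixes X :: "('n::finite) entropic"
  assumes "snd (snd (snd X)) < 0"
  shows "(grad_phi has_derivative hess_phi X) (at X)"
  unfolding grad_phi_def[abs_def] hess_phi_def[abs_def] using assms
  by (auto intro!: derivative_eq_intros simp: field_simps power2_eq_square)

lemma grad_beta_has_derivative:
  fixes X :: "('n::finite) entropic"
  assumes "snd (snd (snd X)) < 0"
  shows "(grad_beta has_derivative hess_beta X) (at X)"
  unfolding grad_beta_def[abs_def] hess_beta_def[abs_def] using assms
  by (auto intro!: derivative_eq_intros
      simp: fun_eq_iff field_simps power2_eq_square power3_eq_cube inner_commute)

definition Sigma_grad :: "(nat \<Rightarrow> real) \<Rightarrow> ('n::finite) entropic \<Rightarrow> 'n entropic" where
  "Sigma_grad \<gamma> X = (pi powr (real CARD('n) / 2) * exp (entropic_phi X)) *\<^sub>R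
    (moment_series \<gamma> 0 (entropic_beta X) *\<^sub>R grad_phi X
      + moment_series \<gamma> 1 (entropic_beta X) *\<^sub>R grad_beta X)"

text \<open>Written in the shape that the product rule produces for the derivative of \<open>Sigma_grad\<close>.\<close>
definition Sigma_hess :: "(nat \<Rightarrow> real) \<Rightarrow> ('n::finite) entropic \<Rightarrow> 'n entropic \<Rightarrow> 'n entropic" where
  "Sigma_hess \<gamma> X h = (pi powr (real CARD('n) / 2) * exp (entropic_phi X)) *\<^sub>R
      ((moment_series \<gamma> 0 (entropic_beta X) *\<^sub>R hess_phi X h
        + (moment_series \<gamma> 1 (entropic_beta X) * (grad_beta X \<bullet> h)) *\<^sub>R grad_phi X)
      + (moment_series \<gamma> 1 (entropic_beta X) *\<^sub>R hess_beta X h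
        + (moment_series \<gamma> 2 (entropic_beta X) * (grad_beta X \<bullet> h)) *\<^sub>R grad_beta X))
    + (pi powr (real CARD('n) / 2) * exp (entropic_phi X) * (grad_phi X \<bullet> h)) *\<^sub>R
      (moment_series \<gamma> 0 (entropic_beta X) *\<^sub>R grad_phi X
        + moment_series \<gamma> 1 (entropic_beta X) *\<^sub>R grad_beta X)"

lemma inner_Sigma_hess:
  fixes X h k :: "('n::finite) entropic"
  shows "Sigma_hess \<gamma> X h \<bullet> k = pi powr (real CARD('n) / 2) * exp (entropic_phi X) *
    (moment_series \<gamma> 0 (entropic_beta X) * (hess_phi X h \<bullet> k + (grad_phi X \<bullet> h) * (grad_phi X \<bullet> k))
     + moment_series \<gamma> 1 (entropic_beta X) *
         (hess_beta X h \<bullet> k + (grad_beta X \<bullet> h) * (grad_phi X \<bullet> k) + (grad_phi X \<bullet> h) * (grad_beta X \<bullet> k))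
     + moment_series \<gamma> 2 (entropic_beta X) * (grad_beta X \<bullet> h) * (grad_beta X \<bullet> k))"
  unfolding Sigma_hess_def inner_add_left inner_scaleR_left by (simp add: algebra_simps)

lemma symmetric_op_Sigma_hess: "symmetric_op (Sigma_hess \<gamma> X)" for X :: "('n::finite) entropic"
  unfolding symmetric_op_def
proof (intro allI)
  fix h k :: "'n entropic"
  show "Sigma_hess \<gamma> X h \<bullet> k = h \<bullet> Sigma_hess \<gamma> X k"
    unfolding inner_commute[of h] inner_Sigma_hess hess_phi_symmetric[of X h] hess_beta_symmetric[of X h]
    by (simp add: algebra_simps)
qed

context pos_weights
begin

lemma pos_def_op_Sigma_hess:
  fixes X :: "('n::finite) entropic"
  assumes C: "snd (snd (snd X)) < 0" and b: "entropic_beta X \<in> interior (S_set \<gamma>)"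
  shows "pos_def_op (Sigma_hess \<gamma> X)"
  unfolding pos_def_op_def
proof (intro allI impI)
  fix h :: "'n entropic"
  assume "h \<noteq> 0"
  define F where "F k = moment_series \<gamma> k (entropic_beta X)" for k
  define u where "u = grad_phi X \<bullet> h"
  define w where "w = grad_beta X \<bullet> h"
  have F: "0 < F k" if "k \<le> 2" for k using moment_series_pos[OF b that] by (simp add: F_def)
  have form: "h \<bullet> Sigma_hess \<gamma> X h = pi powr (real CARD('n) / 2) * exp (entropic_phi X) *
      ((F 0 * u\<^sup>2 + 2 * F 1 * u * w + F 2 * w\<^sup>2) + F 0 * (hess_phi X h \<bullet> h) + F 1 * (hess_beta X h \<bullet> h))"
    unfolding inner_commute[of h] inner_Sigma_hess F_def u_def w_def
    by (simp add: algebra_simps power2_eq_square)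
  have phi_term: "0 \<le> F 0 * (hess_phi X h \<bullet> h)" and beta_term: "0 \<le> F 1 * (hess_beta X h \<bullet> h)"
    using F[of 0] F[of 1] inner_hess_phi_self_nonneg[of X h] inner_hess_beta_self_nonneg[OF C, of h]
    by simp_all
  have "0 < (F 0 * u\<^sup>2 + 2 * F 1 * u * w + F 2 * w\<^sup>2) + F 0 * (hess_phi X h \<bullet> h) + F 1 * (hess_beta X h \<bullet> h)"
  proof (cases "u = 0 \<and> w = 0")
    case False
    then have "0 < F 0 * u\<^sup>2 + 2 * F 1 * u * w + F 2 * w\<^sup>2"
      using moment_series_quadratic_pos[OF b] by (simp add: F_def)
    then show ?thesis using phi_term beta_term by linarith
  next
    case True
    then have "0 < hess_phi X h \<bullet> h \<or> 0 < hess_beta X h \<bullet> h"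
      using hess_phi_or_hess_beta_pos[OF C \<open>h \<noteq> 0\<close>] by (simp add: u_def w_def)
    then have "0 < F 0 * (hess_phi X h \<bullet> h) \<or> 0 < F 1 * (hess_beta X h \<bullet> h)"
      using F[of 0] F[of 1] by auto
    moreover have "F 0 * u\<^sup>2 + 2 * F 1 * u * w + F 2 * w\<^sup>2 = 0" using True by simp
    ultimately show ?thesis using phi_term beta_term by linarith
  qed
  then show "0 < h \<bullet> Sigma_hess \<gamma> X h" unfolding form by simp
qed

lemma moment_series_entropic_beta_has_derivative:
  fixes X :: "('n::finite) entropic"
  assumes "snd (snd (snd X)) < 0" "entropic_beta X \<in> interior (S_set \<gamma>)" "k \<le> 1"
  shows "((\<lambda>Y. moment_series \<gamma> k (entropic_beta Y)) has_derivative
    (\<lambda>h. moment_series \<gamma> (Suc k) (entropic_beta X) * (grad_beta X \<bullet> h))) (at X)"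
  using DERIV_compose_FDERIV[OF moment_series_has_derivative[OF assms(2,3)]
      entropic_beta_has_derivative[OF assms(1)]]
  by (simp add: mult.commute)

lemma Sigma_prefactor_has_derivative:
  fixes X :: "('n::finite) entropic"
  assumes "snd (snd (snd X)) < 0"
  shows "((\<lambda>Y. pi powr (real CARD('n) / 2) * exp (entropic_phi Y)) has_derivative
    (\<lambda>h. pi powr (real CARD('n) / 2) * exp (entropic_phi X) * (grad_phi X \<bullet> h))) (at X)"
  by (auto intro!: derivative_eq_intros entropic_phi_has_derivative[OF assms])

lemma Sigma_grad_has_derivative:
  fixes X :: "('n::finite) entropic"
  assumes C: "snd (snd (snd X)) < 0" and b: "entropic_beta X \<in> interior (S_set \<gamma>)"
  shows "(Sigma_grad \<gamma> has_derivative Sigma_hess \<gamma> X) (at X)"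
proof -
  note F0 = moment_series_entropic_beta_has_derivative[OF C b le0, unfolded One_nat_def[symmetric]]
  note F1 = moment_series_entropic_beta_has_derivative[OF C b order_refl, unfolded Suc_1]
  note V = has_derivative_add[OF has_derivative_scaleR[OF F0 grad_phi_has_derivative[OF C]]
      has_derivative_scaleR[OF F1 grad_beta_has_derivative[OF C]]]
  show ?thesis
    unfolding Sigma_grad_def[abs_def] Sigma_hess_def[abs_def]
    by (rule has_derivative_scaleR[OF Sigma_prefactor_has_derivative[OF C] V])
qed

lemma open_entropic_interior:
  "open {X :: ('n::finite) entropic. snd (snd (snd X)) < 0 \<and> entropic_beta X \<in> interior (S_set \<gamma>)}"
proof -
  have "continuous_on {X :: 'n entropic. snd (snd (snd X)) < 0} entropic_beta"
    using entropic_beta_has_derivative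
    by (intro continuous_at_imp_continuous_on ballI has_derivative_continuous) auto
  moreover have "open {X :: 'n entropic. snd (snd (snd X)) < 0}"
    by (rule open_Collect_less) (intro continuous_intros)+
  ultimately have "open ({X :: 'n entropic. snd (snd (snd X)) < 0} \<inter> entropic_beta -` interior (S_set \<gamma>))"
    using open_interior by (rule continuous_open_preimage)
  moreover have "{X :: 'n entropic. snd (snd (snd X)) < 0 \<and> entropic_beta X \<in> interior (S_set \<gamma>)}
      = {X. snd (snd (snd X)) < 0} \<inter> entropic_beta -` interior (S_set \<gamma>)"
    by auto
  ultimately show ?thesis by simp
qed

lemma Sigma_has_derivative:
  fixes X :: "('n::finite) entropic"
  assumes C: "snd (snd (snd X)) < 0" and b: "entropic_beta X \<in> interior (S_set \<gamma>)"
  shows "(Sigma \<gamma> has_derivative (\<lambda>h. Sigma_grad \<gamma> X \<bullet> h)) (at X)"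
proof (rule has_derivative_transform_within_open[OF _ open_entropic_interior])
  from has_derivative_mult[OF Sigma_prefactor_has_derivative[OF C]
      moment_series_entropic_beta_has_derivative[OF C b le0, unfolded One_nat_def[symmetric]]]
  show "((\<lambda>Y. pi powr (real CARD('n) / 2) * exp (entropic_phi Y) * moment_series \<gamma> 0 (entropic_beta Y))
      has_derivative (\<lambda>h. Sigma_grad \<gamma> X \<bullet> h)) (at X)"
    by (rule has_derivative_eq_rhs) (simp add: fun_eq_iff Sigma_grad_def inner_add_left algebra_simps)
  show "pi powr (real CARD('n) / 2) * exp (entropic_phi Y) * moment_series \<gamma> 0 (entropic_beta Y) = Sigma \<gamma> Y"
    if "Y \<in> {X. snd (snd (snd X)) < 0 \<and> entropic_beta X \<in> interior (S_set \<gamma>)}" for Y :: "'n entropic"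
    using that Sigma_eq_moment_series[of Y] interior_subset[of "S_set \<gamma>"] by auto
qed (use assms in simp)

lemma has_hessian_Sigma:
  fixes X :: "('n::finite) entropic"
  assumes "snd (snd (snd X)) < 0" "entropic_beta X \<in> interior (S_set \<gamma>)"
  shows "has_hessian (Sigma \<gamma>) (Sigma_hess \<gamma> X) X"
  unfolding has_hessian_def
proof (intro exI conjI)
  show "\<forall>\<^sub>F Y in nhds X. (Sigma \<gamma> has_derivative (\<lambda>h. Sigma_grad \<gamma> Y \<bullet> h)) (at Y)"
    using open_entropic_interior assms Sigma_has_derivative unfolding eventually_nhds by blast
  show "(Sigma_grad \<gamma> has_derivative Sigma_hess \<gamma> X) (at X)"
    using Sigma_grad_has_derivative[OF assms] .
qed

end

theorem proposition4p3:
  fixes \<gamma> :: "nat \<Rightarrow> real"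
  assumes gamma_nonneg: "\<forall>m\<ge>1. \<gamma> m \<ge> 0"
    and S_nonempty: "S_set \<gamma> \<noteq> {}"
  shows "(\<forall>(D::real^'n) A B C. C < 0 \<and> B - (norm D)\<^sup>2 / (4 * C) \<in> interior (S_set \<gamma>) \<longrightarrow>
            (\<exists>H. has_hessian (Sigma \<gamma>) H (D, A, B, C) \<and> symmetric_op H \<and> pos_def_op H))
         \<and> strict_convex_on (entropic_domain \<gamma> :: 'n entropic set) (Sigma \<gamma>)"
proof -
  interpret pos_weights \<gamma>
    by unfold_locales (rule S_set_nonempty_imp_weight_pos[OF gamma_nonneg S_nonempty])
  have "\<exists>H. has_hessian (Sigma \<gamma>) H (D, A, B, C) \<and> symmetric_op H \<and> pos_def_op H"
    if "C < 0" "B - (norm D)\<^sup>2 / (4 * C) \<in> interior (S_set \<gamma>)" for D :: "real^'n" and A B C :: real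
  proof -
    have "entropic_beta (D, A, B, C) \<in> interior (S_set \<gamma>)"
      using that(2) by (simp add: entropic_beta_def)
    with \<open>C < 0\<close> show ?thesis
      using has_hessian_Sigma[of "(D, A, B, C)"] symmetric_op_Sigma_hess[of \<gamma> "(D, A, B, C)"]
        pos_def_op_Sigma_hess[of "(D, A, B, C)"]
      by auto
  qed
  then show ?thesis using strict_convex_on_Sigma by blast
qed

end
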